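(* Let $\phi\colon(T,X)\to(T,Y)$ be a proximal extension of compact dynamics such that $X$ has a dense set of a.p. points. Then $(T,X)$ is an M-dynamic if and only if $(T,Y)$ is an M-dynamic.
   Context: $T$ is a group or monoid acting continuously. An extension is a continuous equivariant surjection; it is proximal if for every $(x,x')$ with $\phi x=\phi x'$ the orbit closure $\overline{T(x,x')}$ meets the diagonal $\Delta_X$. A point is a.p. if its return times to every neighborhood form a syndetic subset of $T$ (i.e. there is compact $K$ with $Kt\cap A\ne\emptyset$ for all $t$). A dynamic is topologically transitive if $\{t:V\cap tU\ne\emptyset\}\ne\emptyset$ for all nonempty open $U,V$; it is an M-dynamic if it is topologically transitive and has a dense set of a.p. points. *)

theory Defs
  imports "HOL-Analysis.Analysis"
begin

text \<open>A dynamic (T,X) is a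
  continuous left action of T on a topological space X.\<close>

definition top_monoid :: "'a::{monoid_mult,topological_space} itself \<Rightarrow> bool" where
  "top_monoid _ \<longleftrightarrow> continuous_on UNIV (\<lambda>p::'a \<times> 'a. fst p * snd p)"

definition cont_action :: "('a::{monoid_mult,topological_space} \<Rightarrow> 'x::topological_space \<Rightarrow> 'x) \<Rightarrow> bool" where
  "cont_action act \<longleftrightarrow>
     continuous_on UNIV (\<lambda>p::'a \<times> 'x. act (fst p) (snd p)) \<and>
     (\<forall>x. act 1 x = x) \<and> (\<forall>s t x. act (s * t) x = act s (act t x))"

definition extension ::
  "('a::{monoid_mult,topological_space} \<Rightarrow> 'x::topological_space \<Rightarrow> 'x) \<Rightarrow>
   ('a \<Rightarrow> 'y::topological_space \<Rightarrow> 'y) \<Rightarrow> ('x \<Rightarrow> 'y) \<Rightarrow> bool" where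
  "extension actX actY \<phi> \<longleftrightarrow> continuous_on UNIV \<phi> \<and> surj \<phi> \<and>
     (\<forall>t x. \<phi> (actX t x) = actY t (\<phi> x))"

definition proximal_ext ::
  "('a::{monoid_mult,topological_space} \<Rightarrow> 'x::topological_space \<Rightarrow> 'x) \<Rightarrow>
   ('a \<Rightarrow> 'y::topological_space \<Rightarrow> 'y) \<Rightarrow> ('x \<Rightarrow> 'y) \<Rightarrow> bool" where
  "proximal_ext actX actY \<phi> \<longleftrightarrow> extension actX actY \<phi> \<and>
     (\<forall>x x'. \<phi> x = \<phi> x' \<longrightarrow>
        closure (range (\<lambda>t. (actX t x, actX t x'))) \<inter> {(z, z) | z. True} \<noteq> {})"

definition syndetic :: "'a::{monoid_mult,topological_space} set \<Rightarrow> bool" where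
  "syndetic A \<longleftrightarrow> (\<exists>K. compact K \<and> (\<forall>t. (\<lambda>k. k * t) ` K \<inter> A \<noteq> {}))"

definition ap_point :: "('a::{monoid_mult,topological_space} \<Rightarrow> 'x::topological_space \<Rightarrow> 'x) \<Rightarrow> 'x \<Rightarrow> bool" where
  "ap_point act x \<longleftrightarrow> (\<forall>U. open U \<and> x \<in> U \<longrightarrow> syndetic {t. act t x \<in> U})"

definition top_transitive :: "('a::{monoid_mult,topological_space} \<Rightarrow> 'x::topological_space \<Rightarrow> 'x) \<Rightarrow> bool" where
  "top_transitive act \<longleftrightarrow>
     (\<forall>U V. open U \<and> U \<noteq> {} \<and> open V \<and> V \<noteq> {} \<longrightarrow> (\<exists>t. V \<inter> act t ` U \<noteq> {}))"

definition M_dynamic :: "('a::{monoid_mult,topological_space} \<Rightarrow> 'x::topological_space \<Rightarrow> 'x) \<Rightarrow> bool" where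
  "M_dynamic act \<longleftrightarrow> top_transitive act \<and> closure {x. ap_point act x} = UNIV"

end

theory Submission
  imports Defs
begin

text \<open>Density of a.p. points passes to factors, so on both sides being an M-dynamic reduces to
  topological transitivity, which factors inherit. For the converse, the syndeticity of the return
  times of an a.p. point \<open>u\<close> to a neighbourhood survives, by compactness of the syndeticity set
  \<open>K\<close>, in the orbit closure of \<open>u\<close>; hence every point proximal to \<open>u\<close>, in particular every
  point of the fibre of \<open>u\<close>, visits that neighbourhood. So the open set \<open>T\<^sup>-\<^sup>1U\<close> of points
  visiting \<open>U\<close> contains a tube \<open>\<phi>\<^sup>-\<^sup>1P\<close>, and transitivity of \<open>Y\<close> yields a point visiting
  both \<open>U\<close> and \<open>V\<close>. An a.p. point \<open>a\<close> nearby visits \<open>U\<close> at time \<open>t\<close> and \<open>V\<close> at time \<open>r\<close>;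
  syndeticity provides \<open>k\<close> with \<open>k t a \<in> r\<^sup>-\<^sup>1V\<close>, so \<open>r k\<close> carries \<open>t a \<in> U\<close> into \<open>V\<close>.\<close>

lemma cont_action_continuous_on:
  assumes "cont_action act"
  shows "continuous_on UNIV (\<lambda>p. act (fst p) (snd p))"
  using assms unfolding cont_action_def by blast

lemma cont_action_mult:
  assumes "cont_action act"
  shows "act (s * t) x = act s (act t x)"
  using assms unfolding cont_action_def by blast

lemma continuous_on_cont_action:
  assumes "cont_action act"
  shows "continuous_on UNIV (act t)"
  using continuous_on_compose2[OF cont_action_continuous_on[OF assms], of UNIV "\<lambda>x. (t, x)"]
  by (simp add: continuous_intros)

lemma compact_t2_closed_nhd:
  fixes u :: "'x::t2_space"
  assumes "compact (UNIV :: 'x set)" "open U" "u \<in> U"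
  obtains V where "open V" "u \<in> V" "closure V \<subseteq> U"
proof -
  have H: "Hausdorff_space (euclidean :: 'x topology)"
    unfolding Hausdorff_space_def by (metis disjnt_def open_openin separation_t2)
  have "compact (- U)"
    using assms compact_Int_closed[of UNIV "- U"] by auto
  moreover have "disjnt {u} (- U)" using assms by auto
  ultimately obtain A B where "open A" "open B" "{u} \<subseteq> A" "- U \<subseteq> B" "disjnt A B"
    using Hausdorff_space_compact_separation[OF H]
    by (metis compact_sing compactin_euclidean_iff open_openin)
  moreover have "closure A \<subseteq> - B"
    using calculation by (intro closure_minimal) (auto simp: disjnt_def)
  ultimately show ?thesis using that[of A] by auto
qed

lemma closed_some_compact_translate_in:
  assumes act: "continuous_on UNIV (\<lambda>p. act (fst p) (snd p))"
    and "compact K" and "closed C"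
  shows "closed {x. \<exists>k\<in>K. act k x \<in> C}" (is "closed ?R")
proof -
  define W where "W = (\<lambda>p. act (snd p) (fst p)) -` (- C)"
  have "continuous_on UNIV (\<lambda>p. act (snd p) (fst p))"
    using continuous_on_compose2[OF act, of UNIV "\<lambda>p. (snd p, fst p)"]
    by (simp add: continuous_intros)
  then have "open W"
    unfolding W_def using \<open>closed C\<close> by (intro open_vimage) auto
  have "\<exists>X0. open X0 \<and> x \<in> X0 \<and> X0 \<subseteq> - ?R" if "x \<in> - ?R" for x
  proof -
    have "{x} \<times> K \<subseteq> W" using that unfolding W_def by auto
    then obtain X0 where "x \<in> X0" "open X0" and X0: "X0 \<times> K \<subseteq> W"
      using Elementary_Topology.tube_lemma[OF \<open>compact K\<close> \<open>open W\<close>] by blast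
    moreover have "X0 \<subseteq> - ?R"
      using X0 unfolding W_def by fastforce
    ultimately show ?thesis by blast
  qed
  then have "open (- ?R)" by (subst open_subopen) (intro ballI)
  then show ?thesis by (simp only: closed_def)
qed

lemma ap_point_orbit_closure_returns:
  fixes act :: "'a::{monoid_mult,topological_space} \<Rightarrow> 'x::t2_space \<Rightarrow> 'x"
  assumes act: "cont_action act" and "compact (UNIV :: 'x set)"
    and "ap_point act u" and "open U" and "u \<in> U"
    and w: "w \<in> closure (range (\<lambda>t. act t u))"
  shows "\<exists>k. act k w \<in> U"
proof -
  obtain V where "open V" "u \<in> V" and V: "closure V \<subseteq> U"
    using compact_t2_closed_nhd[OF assms(2,4,5)] by blast
  then have "syndetic {t. act t u \<in> V}"
    using \<open>ap_point act u\<close> unfolding ap_point_def by blast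
  then obtain K where "compact K" and K: "\<And>t. (\<lambda>k. k * t) ` K \<inter> {t. act t u \<in> V} \<noteq> {}"
    unfolding syndetic_def by blast
  let ?R = "{x. \<exists>k\<in>K. act k x \<in> closure V}"
  have "range (\<lambda>t. act t u) \<subseteq> ?R"
  proof clarify
    fix t
    obtain k where "k \<in> K" "act (k * t) u \<in> V" using K[of t] by blast
    then show "\<exists>k\<in>K. act k (act t u) \<in> closure V"
      using closure_subset cont_action_mult[OF act] by fastforce
  qed
  moreover have "closed ?R"
    using closed_some_compact_translate_in[OF cont_action_continuous_on[OF act] \<open>compact K\<close>] by simp
  ultimately have "w \<in> ?R" using w closure_minimal by blast
  then show ?thesis using V by blast
qed

lemma proximal_to_ap_point_visits:
  fixes act :: "'a::{monoid_mult,topological_space} \<Rightarrow> 'x::t2_space \<Rightarrow> 'x"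
  assumes act: "cont_action act" and "compact (UNIV :: 'x set)"
    and "ap_point act u" and "open U" and "u \<in> U"
    and prox: "closure (range (\<lambda>t. (act t u, act t z))) \<inter> {(v, v) | v. True} \<noteq> {}"
  shows "\<exists>t. act t z \<in> U"
proof -
  obtain w where w: "(w, w) \<in> closure (range (\<lambda>t. (act t u, act t z)))" using prox by blast
  have "closure (range (\<lambda>t. (act t u, act t z))) \<subseteq> closure (range (\<lambda>t. act t u)) \<times> UNIV"
    by (intro closure_minimal) (auto intro: closed_Times closure_subset[THEN subsetD])
  with w obtain k where k: "act k w \<in> U"
    using ap_point_orbit_closure_returns[OF assms(1-5)] by blast
  define N where "N = (\<lambda>p::'x \<times> 'x. act k (snd p)) -` U"
  have "continuous_on UNIV (\<lambda>p. act k (snd p))"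
    using continuous_on_compose2[OF continuous_on_cont_action[OF act], of UNIV snd]
    by (simp add: continuous_intros)
  then have "open N" unfolding N_def using \<open>open U\<close> by (intro open_vimage) auto
  moreover have "(w, w) \<in> N" unfolding N_def using k by simp
  ultimately have "range (\<lambda>t. (act t u, act t z)) \<inter> N \<noteq> {}"
    using w open_Int_closure_eq_empty by blast
  then obtain t where "act k (act t z) \<in> U" unfolding N_def by auto
  then show ?thesis using cont_action_mult[OF act] by metis
qed

definition hitting_set :: "('a \<Rightarrow> 'x \<Rightarrow> 'x) \<Rightarrow> 'x set \<Rightarrow> 'x set" where
  "hitting_set act U = {x. \<exists>t. act t x \<in> U}"

lemma open_hitting_set:
  assumes "cont_action act" and "open U"
  shows "open (hitting_set act U)"
proof -
  have "\<And>t. open (act t -` U)"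
    using assms continuous_on_cont_action open_vimage by blast
  moreover have "hitting_set act U = (\<Union>t. act t -` U)" unfolding hitting_set_def by auto
  ultimately show ?thesis by auto
qed

lemma hitting_set_act_imp:
  assumes "cont_action act" and "act s x \<in> hitting_set act U"
  shows "x \<in> hitting_set act U"
proof -
  obtain t where "act t (act s x) \<in> U" using assms(2) unfolding hitting_set_def by blast
  then have "act (t * s) x \<in> U" using cont_action_mult[OF assms(1)] by simp
  then show ?thesis unfolding hitting_set_def by blast
qed

lemma dense_Int_open_nonempty:
  assumes "closure S = UNIV" "open U" "U \<noteq> {}"
  shows "S \<inter> U \<noteq> {}"
  using assms open_Int_closure_eq_empty by blast

lemma proximal_ext_fibres_in_hitting_set:
  fixes actX :: "'a::{monoid_mult,topological_space} \<Rightarrow> 'x::t2_space \<Rightarrow> 'x"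
    and actY :: "'a \<Rightarrow> 'y::t2_space \<Rightarrow> 'y"
  assumes act: "cont_action actX" and cX: "compact (UNIV :: 'x set)"
    and pr: "proximal_ext actX actY \<phi>"
    and dense: "closure {x. ap_point actX x} = UNIV"
    and "open U" and "U \<noteq> {}"
  obtains P where "open P" "P \<noteq> {}" "\<phi> -` P \<subseteq> hitting_set actX U"
proof -
  let ?G = "hitting_set actX U"
  obtain u where ap: "ap_point actX u" and "u \<in> U"
    using dense_Int_open_nonempty[OF dense \<open>open U\<close> \<open>U \<noteq> {}\<close>] by blast
  have "continuous_on UNIV \<phi>" using pr unfolding proximal_ext_def extension_def by blast
  moreover have "compact (- ?G)"
    using cX open_hitting_set[OF act \<open>open U\<close>] compact_Int_closed[of UNIV "- ?G"] by auto
  ultimately have "compact (\<phi> ` (- ?G))"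
    using compact_continuous_image continuous_on_subset by blast
  then have "open (- \<phi> ` (- ?G))" by (intro open_Compl compact_imp_closed)
  moreover have "\<phi> u \<notin> \<phi> ` (- ?G)"
  proof
    assume "\<phi> u \<in> \<phi> ` (- ?G)"
    then obtain z where "z \<notin> ?G" "\<phi> u = \<phi> z" by auto
    moreover have "closure (range (\<lambda>t. (actX t u, actX t z))) \<inter> {(v, v) | v. True} \<noteq> {}"
      using pr \<open>\<phi> u = \<phi> z\<close> unfolding proximal_ext_def by blast
    ultimately show False
      using proximal_to_ap_point_visits[OF act cX ap \<open>open U\<close> \<open>u \<in> U\<close>]
      unfolding hitting_set_def by blast
  qed
  ultimately show ?thesis using that[of "- \<phi> ` (- ?G)"] by blast
qed

lemma top_transitive_if_hitting_sets_meet: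
  fixes act :: "'a::{monoid_mult,topological_space} \<Rightarrow> 'x::topological_space \<Rightarrow> 'x"
  assumes act: "cont_action act"
    and dense: "closure {x. ap_point act x} = UNIV"
    and meet: "\<And>U V. open U \<Longrightarrow> U \<noteq> {} \<Longrightarrow> open V \<Longrightarrow> V \<noteq> {} \<Longrightarrow>
                      hitting_set act U \<inter> hitting_set act V \<noteq> {}"
  shows "top_transitive act"
  unfolding top_transitive_def
proof clarify
  fix U V :: "'x set" assume U: "open U" "U \<noteq> {}" and V: "open V" "V \<noteq> {}"
  have "open (hitting_set act U \<inter> hitting_set act V)"
    using open_hitting_set[OF act] U V by blast
  then obtain a where "ap_point act a" "a \<in> hitting_set act U" "a \<in> hitting_set act V"
    using dense_Int_open_nonempty[OF dense] meet[OF U V] by blast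
  then obtain t r where a: "ap_point act a" "act t a \<in> U" "act r a \<in> V"
    unfolding hitting_set_def by blast
  have "open (act r -` V)" using V continuous_on_cont_action[OF act] open_vimage by blast
  then have "syndetic {s. act s a \<in> act r -` V}"
    using a unfolding ap_point_def by blast
  then obtain K where "\<And>t. (\<lambda>k. k * t) ` K \<inter> {s. act s a \<in> act r -` V} \<noteq> {}"
    unfolding syndetic_def by blast
  then obtain k where "act (k * t) a \<in> act r -` V" by blast
  then have "act (r * k) (act t a) \<in> V" using cont_action_mult[OF act] by simp
  with a show "\<exists>s. V \<inter> act s ` U \<noteq> {}" by blast
qed

lemma extension_ap_point:
  assumes "extension actX actY \<phi>" and "ap_point actX x"
  shows "ap_point actY (\<phi> x)"
  unfolding ap_point_def
proof clarify
  fix U assume U: "open U" "\<phi> x \<in> U"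
  have "open (\<phi> -` U)"
    using U assms(1) unfolding extension_def by (intro open_vimage) auto
  then have "syndetic {t. actX t x \<in> \<phi> -` U}" using assms(2) U unfolding ap_point_def by auto
  moreover have "{t. actX t x \<in> \<phi> -` U} = {t. actY t (\<phi> x) \<in> U}"
    using assms(1) unfolding extension_def by auto
  ultimately show "syndetic {t. actY t (\<phi> x) \<in> U}" by simp
qed

lemma extension_dense_ap_points:
  assumes ext: "extension actX actY \<phi>" and dense: "closure {x. ap_point actX x} = UNIV"
  shows "closure {y. ap_point actY y} = UNIV"
proof -
  have "continuous_on UNIV \<phi>" "surj \<phi>" using ext unfolding extension_def by auto
  then have "UNIV \<subseteq> closure (\<phi> ` {x. ap_point actX x})"
    using image_closure_subset[OF continuous_on_subset closed_closure closure_subset] dense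
    by (metis subset_UNIV)
  also have "\<dots> \<subseteq> closure {y. ap_point actY y}"
    using extension_ap_point[OF ext] by (intro closure_mono) auto
  finally show ?thesis by blast
qed

lemma extension_top_transitive:
  fixes actX :: "'a::{monoid_mult,topological_space} \<Rightarrow> 'x::topological_space \<Rightarrow> 'x"
    and actY :: "'a \<Rightarrow> 'y::topological_space \<Rightarrow> 'y"
  assumes ext: "extension actX actY \<phi>" and trans: "top_transitive actX"
  shows "top_transitive actY"
  unfolding top_transitive_def
proof clarify
  fix U V :: "'y set" assume U: "open U" "U \<noteq> {}" and V: "open V" "V \<noteq> {}"
  have "continuous_on UNIV \<phi>" "surj \<phi>" and eqv: "\<And>t x. \<phi> (actX t x) = actY t (\<phi> x)"
    using ext unfolding extension_def by auto
  then have "open (\<phi> -` U)" "\<phi> -` U \<noteq> {}" "open (\<phi> -` V)" "\<phi> -` V \<noteq> {}"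
    using U V by (auto intro!: open_vimage simp: surj_vimage_empty)
  then obtain t x where "\<phi> x \<in> U" "\<phi> (actX t x) \<in> V"
    using trans unfolding top_transitive_def by blast
  then show "\<exists>t. V \<inter> actY t ` U \<noteq> {}" using eqv by auto
qed

lemma proximal_ext_top_transitive_lift:
  fixes actX :: "'a::{monoid_mult,topological_space} \<Rightarrow> 'x::t2_space \<Rightarrow> 'x"
    and actY :: "'a \<Rightarrow> 'y::t2_space \<Rightarrow> 'y"
  assumes act: "cont_action actX" and cX: "compact (UNIV :: 'x set)"
    and pr: "proximal_ext actX actY \<phi>"
    and dense: "closure {x. ap_point actX x} = UNIV"
    and trans: "top_transitive actY"
  shows "top_transitive actX"
proof (rule top_transitive_if_hitting_sets_meet[OF act dense])
  fix U V :: "'x set" assume U: "open U" "U \<noteq> {}" and V: "open V" "V \<noteq> {}"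
  obtain PU where PU: "open PU" "PU \<noteq> {}" "\<phi> -` PU \<subseteq> hitting_set actX U"
    using proximal_ext_fibres_in_hitting_set[OF act cX pr dense U] by blast
  obtain PV where PV: "open PV" "PV \<noteq> {}" "\<phi> -` PV \<subseteq> hitting_set actX V"
    using proximal_ext_fibres_in_hitting_set[OF act cX pr dense V] by blast
  have "surj \<phi>" and eqv: "\<And>t x. \<phi> (actX t x) = actY t (\<phi> x)"
    using pr unfolding proximal_ext_def extension_def by auto
  obtain s where "PU \<inter> actY s ` PV \<noteq> {}"
    using trans PU(1,2) PV(1,2) unfolding top_transitive_def by blast
  then obtain y where "y \<in> PV" "actY s y \<in> PU" by blast
  moreover obtain z where "\<phi> z = y" using \<open>surj \<phi>\<close> by (metis surj_def)
  ultimately have "z \<in> \<phi> -` PV" "actX s z \<in> \<phi> -` PU" using eqv by auto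
  then have "z \<in> hitting_set actX V" "actX s z \<in> hitting_set actX U"
    using PU(3) PV(3) by blast+
  then show "hitting_set actX U \<inter> hitting_set actX V \<noteq> {}"
    using hitting_set_act_imp[OF act] by blast
qed

theorem lemma3p8:
  fixes actX :: "'a::{monoid_mult,topological_space} \<Rightarrow> 'x::t2_space \<Rightarrow> 'x"
    and actY :: "'a \<Rightarrow> 'y::t2_space \<Rightarrow> 'y"
    and \<phi> :: "'x \<Rightarrow> 'y"
  assumes "top_monoid TYPE('a)"
    and "cont_action actX" and "cont_action actY"
    and "compact (UNIV :: 'x set)" and "compact (UNIV :: 'y set)"
    and "proximal_ext actX actY \<phi>"
    and "closure {x. ap_point actX x} = UNIV"
  shows "M_dynamic actX \<longleftrightarrow> M_dynamic actY"
proof -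
  have ext: "extension actX actY \<phi>" using assms(6) unfolding proximal_ext_def by blast
  then have "closure {y. ap_point actY y} = UNIV"
    using extension_dense_ap_points assms(7) by blast
  then have "M_dynamic actY \<longleftrightarrow> top_transitive actY" unfolding M_dynamic_def by simp
  moreover have "M_dynamic actX \<longleftrightarrow> top_transitive actX" unfolding M_dynamic_def using assms(7) by simp
  ultimately show ?thesis
    using extension_top_transitive[OF ext] proximal_ext_top_transitive_lift[OF assms(2,4,6,7)] by blast
qed

end
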